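(* Let $(X,d)$ be a metric space and $\ell:X\to[0,+\infty)$ lower semicontinuous with $\inf_X\ell=0$. For $\lambda>0$ let $u_\lambda$ be the Perron solution of $(\mathcal{G}_\lambda)$. Then for every $\alpha>0$, $u_\lambda\to u_\alpha$ pointwise as $\lambda\to\alpha^-$.
   Context: Global slope: $G[u](x)=\sup_{y\neq x}\frac{(u(x)-u(y))_+}{d(x,y)}$ if $u(x)<+\infty$, $G[u](x)=+\infty$ otherwise. A solution of $(\mathcal{G}_\lambda)$ is a lower semicontinuous $u$ with $\inf_Xu=0$ and $\lambda u+G[u]=\ell$ on $X$; the Perron solution is the solution that is pointwise maximal among all solutions (it exists for every $\lambda>0$). *)

theory Defs
  imports "HOL-Analysis.Analysis"
begin

definition lsc :: "('a::topological_space \<Rightarrow> real) \<Rightarrow> bool" where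
  "lsc f \<longleftrightarrow> (\<forall>x. \<forall>t < f x. \<forall>\<^sub>F y in at x. t < f y)"

text \<open>Global slope G[u](x) = sup over y different from x of (u x - u y)_+ / d(x,y),
  valued in the extended reals (empty supremum read as 0).\<close>
definition global_slope :: "('a::metric_space \<Rightarrow> real) \<Rightarrow> 'a \<Rightarrow> ereal" where
  "global_slope u x = Sup (insert 0 ((\<lambda>y. ereal (max (u x - u y) 0 / dist x y)) ` {y. y \<noteq> x}))"

definition is_solution :: "('a::metric_space \<Rightarrow> real) \<Rightarrow> real \<Rightarrow> ('a \<Rightarrow> real) \<Rightarrow> bool" where
  "is_solution l lam u \<longleftrightarrow> lsc u \<and> (INF x. ereal (u x)) = 0 \<and>
     (\<forall>x. ereal (lam * u x) + global_slope u x = ereal (l x))"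

definition perron_solution :: "('a::metric_space \<Rightarrow> real) \<Rightarrow> real \<Rightarrow> ('a \<Rightarrow> real) \<Rightarrow> bool" where
  "perron_solution l lam u \<longleftrightarrow> is_solution l lam u \<and>
     (\<forall>v. is_solution l lam v \<longrightarrow> (\<forall>x. v x \<le> u x))"

end

(*
  Call w a lambda-subsolution if lambda w + G[w] <= l, i.e. lambda w <= l and
  w x - w y <= (l x - lambda w x) d(x,y). The Perron solution u_lambda dominates every
  subsolution: the supremum of all subsolutions is again one, and wherever its equation
  were strict, adding a small cone centred at that point would produce a larger
  subsolution (lower semicontinuity of l keeps the cone admissible). A nonnegative
  mu-subsolution is a lambda-subsolution for lambda <= mu, so u_lambda decreases in
  lambda. Its monotone limit as lambda tends to alpha from the left is an
  alpha-subsolution, since the defining inequalities pass to the limit, hence lies below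
  u_alpha, while monotonicity gives the reverse inequality.
*)
theory Submission
  imports Defs
begin

lemma tendsto_at_left_INF_antimono:
  fixes f :: "real \<Rightarrow> real"
  assumes "a < b" and antimono: "\<And>s t. a < s \<Longrightarrow> s \<le> t \<Longrightarrow> t < b \<Longrightarrow> f t \<le> f s"
    and bdd: "bdd_below (f ` {a<..<b})"
  shows "(f \<longlongrightarrow> (INF t\<in>{a<..<b}. f t)) (at_left b)"
proof (rule decreasing_tendsto)
  have ne: "{a<..<b} \<noteq> {}"
    using \<open>a < b\<close> by simp
  show "\<forall>\<^sub>F t in at_left b. (INF t\<in>{a<..<b}. f t) \<le> f t"
    using eventually_at_left_real[OF \<open>a < b\<close>] by eventually_elim (rule cINF_lower[OF bdd])
  fix y assume "(INF t\<in>{a<..<b}. f t) < y"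
  then obtain s where s: "s \<in> {a<..<b}" "f s < y"
    using cINF_less_iff[OF ne bdd] by blast
  have "\<forall>\<^sub>F t in at_left b. t \<in> {s<..<b}"
    using s by (intro eventually_at_left_real) auto
  then show "\<forall>\<^sub>F t in at_left b. f t < y"
  proof (rule eventually_mono)
    fix t assume "t \<in> {s<..<b}"
    then have "f t \<le> f s"
      using s by (intro antimono) auto
    with s show "f t < y"
      by simp
  qed
qed

definition is_subsolution :: "('a::metric_space \<Rightarrow> real) \<Rightarrow> real \<Rightarrow> ('a \<Rightarrow> real) \<Rightarrow> bool" where
  "is_subsolution l lam w \<longleftrightarrow>
     (\<forall>x. lam * w x \<le> l x \<and> (\<forall>y. w x - w y \<le> (l x - lam * w x) * dist x y))"

lemma global_slope_nonneg: "0 \<le> global_slope u x"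
  unfolding global_slope_def by (simp add: Sup_upper)

lemma global_slope_le_iff:
  "global_slope u x \<le> ereal c \<longleftrightarrow> 0 \<le> c \<and> (\<forall>y. u x - u y \<le> c * dist x y)"
proof -
  have "max (u x - u y) 0 / dist x y \<le> c \<longleftrightarrow> u x - u y \<le> c * dist x y"
    if "0 \<le> c" "y \<noteq> x" for y
    using that by (simp add: divide_le_eq)
  then show ?thesis
    unfolding global_slope_def
    by (auto simp: Sup_le_iff) (metis diff_self dist_self mult_zero_right order_refl)
qed

lemma is_subsolution_iff_global_slope_le:
  "is_subsolution l lam w \<longleftrightarrow> (\<forall>x. global_slope w x \<le> ereal (l x - lam * w x))"
  by (auto simp: is_subsolution_def global_slope_le_iff)

lemma is_solution_imp_is_subsolution:
  assumes "is_solution l lam u"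
  shows "is_subsolution l lam u"
  unfolding is_subsolution_iff_global_slope_le
proof
  fix x
  have "ereal (lam * u x) + global_slope u x = ereal (l x)"
    using assms by (simp add: is_solution_def)
  with global_slope_nonneg[of u x] show "global_slope u x \<le> ereal (l x - lam * u x)"
    by (cases "global_slope u x") auto
qed

lemma is_subsolution_zero: "(\<And>x. 0 \<le> l x) \<Longrightarrow> is_subsolution l lam (\<lambda>_. 0)"
  by (simp add: is_subsolution_def)

lemma is_subsolution_lsc:
  assumes "is_subsolution l lam w"
  shows "lsc w"
  unfolding lsc_def
proof (intro allI impI)
  fix x t assume t: "t < w x"
  define c where "c = l x - lam * w x"
  have c: "0 \<le> c" and low: "\<And>y. w x - c * dist x y \<le> w y"
    using assms by (auto simp: is_subsolution_def c_def algebra_simps)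
  show "\<forall>\<^sub>F y in at x. t < w y"
    unfolding eventually_at
  proof (intro exI[of _ "(w x - t) / (c + 1)"] conjI ballI impI)
    show "0 < (w x - t) / (c + 1)" using t c by simp
    fix y assume "y \<noteq> x \<and> dist y x < (w x - t) / (c + 1)"
    then have "(c + 1) * dist x y < w x - t" using c by (simp add: dist_commute field_simps)
    then show "t < w y" using low[of y] c by (smt (verit) mult_right_mono zero_le_dist)
  qed
qed

lemma is_subsolution_antimono:
  assumes "is_subsolution l mu w" "\<And>x. 0 \<le> w x" "lam \<le> mu"
  shows "is_subsolution l lam w"
proof -
  have "lam * w x \<le> mu * w x" for x
    using assms(2,3) by (simp add: mult_right_mono)
  with assms(1) show ?thesis
    unfolding is_subsolution_def
    by (smt (verit, best) mult_right_mono zero_le_dist)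
qed

lemma is_subsolution_tendsto:
  assumes F: "F \<noteq> bot" and lam: "(lam \<longlongrightarrow> alpha) F"
    and w: "\<And>x. ((\<lambda>i. w i x) \<longlongrightarrow> v x) F"
    and sub: "\<forall>\<^sub>F i in F. is_subsolution l (lam i) (w i)"
  shows "is_subsolution l alpha v"
  unfolding is_subsolution_def
proof (intro allI conjI)
  fix x y
  show "alpha * v x \<le> l x"
  proof (rule tendsto_upperbound[OF _ _ F])
    show "((\<lambda>i. lam i * w i x) \<longlongrightarrow> alpha * v x) F"
      by (intro tendsto_intros lam w)
    show "\<forall>\<^sub>F i in F. lam i * w i x \<le> l x"
      using sub by eventually_elim (simp add: is_subsolution_def)
  qed
  have "v x - v y - (l x - alpha * v x) * dist x y \<le> 0"
  proof (rule tendsto_upperbound[OF _ _ F])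
    show "((\<lambda>i. w i x - w i y - (l x - lam i * w i x) * dist x y) \<longlongrightarrow>
        v x - v y - (l x - alpha * v x) * dist x y) F"
      by (intro tendsto_intros lam w)
    show "\<forall>\<^sub>F i in F. w i x - w i y - (l x - lam i * w i x) * dist x y \<le> 0"
      using sub by eventually_elim (simp add: is_subsolution_def)
  qed
  then show "v x - v y \<le> (l x - alpha * v x) * dist x y"
    by simp
qed

lemma is_subsolution_SUP:
  assumes lam: "0 < lam" and "S \<noteq> {}" and S: "\<And>w. w \<in> S \<Longrightarrow> is_subsolution l lam w"
  shows "is_subsolution l lam (\<lambda>x. SUP w\<in>S. w x)"
proof -
  define W where "W x = (SUP w\<in>S. w x)" for x
  have bound: "w x \<le> l x / lam" if "w \<in> S" for w x
    using S[OF that] lam by (simp add: is_subsolution_def pos_le_divide_eq mult.commute)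
  have upper: "w x \<le> W x" if "w \<in> S" for w x
    unfolding W_def using that bound by (intro cSUP_upper bdd_aboveI2) auto
  show ?thesis
    unfolding is_subsolution_def W_def[symmetric]
  proof (intro allI conjI)
    fix x y
    have "W x \<le> l x / lam"
      unfolding W_def using \<open>S \<noteq> {}\<close> bound by (intro cSUP_least) auto
    then show "lam * W x \<le> l x"
      using lam by (simp add: pos_le_divide_eq mult.commute)
    have pos: "0 < 1 + lam * dist x y"
      using lam by (simp add: add_pos_nonneg)
    \<comment> \<open>the subsolution inequality, solved for \<open>w x\<close>, is an upper bound increasing in \<open>w y\<close>\<close>
    have "W x \<le> (W y + l x * dist x y) / (1 + lam * dist x y)"
      unfolding W_def[of x]
    proof (rule cSUP_least[OF \<open>S \<noteq> {}\<close>])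
      fix w assume "w \<in> S"
      then have "w x - w y \<le> (l x - lam * w x) * dist x y" "w y \<le> W y"
        using S upper by (auto simp: is_subsolution_def)
      then have "w x * (1 + lam * dist x y) \<le> W y + l x * dist x y"
        by (simp add: algebra_simps)
      then show "w x \<le> (W y + l x * dist x y) / (1 + lam * dist x y)"
        using pos by (simp add: pos_le_divide_eq)
    qed
    then have "W x * (1 + lam * dist x y) \<le> W y + l x * dist x y"
      using pos by (simp add: pos_le_divide_eq)
    then show "W x - W y \<le> (l x - lam * W x) * dist x y"
      by (simp add: algebra_simps)
  qed
qed

lemma is_subsolution_INF_eq_zero:
  assumes lam: "0 < lam" and l_inf: "(INF x. ereal (l x)) = 0"
    and nonneg: "\<And>x. 0 \<le> w x" and w: "is_subsolution l lam w"
  shows "(INF x. ereal (w x)) = 0"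
proof (rule antisym)
  show "(INF x. ereal (w x)) \<le> 0"
  proof (rule ereal_le_epsilon2)
    fix e :: real assume "0 < e"
    then have "(INF x. ereal (l x)) < ereal (lam * e)"
      using lam l_inf by simp
    then obtain x where "l x < lam * e"
      by (auto simp: INF_less_iff)
    with w lam have "w x \<le> e"
      by (smt (verit, best) is_subsolution_def mult_le_cancel_left_pos)
    then have "(INF x. ereal (w x)) \<le> ereal e"
      by (meson INF_lower2 UNIV_I ereal_less_eq(3))
    then show "(INF x. ereal (w x)) \<le> 0 + ereal e"
      by simp
  qed
  show "0 \<le> (INF x. ereal (w x))"
    using nonneg by (intro INF_greatest) simp
qed

lemma is_subsolution_max_cone:
  assumes W: "is_subsolution l lam W" and k: "0 \<le> k"
    and cone: "\<And>z. W z < c - k * dist z x0 \<Longrightarrow> k + lam * (c - k * dist z x0) \<le> l z"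
  shows "is_subsolution l lam (\<lambda>z. max (W z) (c - k * dist z x0))"
  unfolding is_subsolution_def
proof (intro allI)
  fix z
  define \<phi> where "\<phi> z = c - k * dist z x0" for z
  show "lam * max (W z) (\<phi> z) \<le> l z \<and>
      (\<forall>y. max (W z) (\<phi> z) - max (W y) (\<phi> y) \<le> (l z - lam * max (W z) (\<phi> z)) * dist z y)"
  proof (cases "\<phi> z \<le> W z")
    case True
    then show ?thesis
      using W by (simp add: is_subsolution_def) (smt (verit))
  next
    case False
    then have key: "k \<le> l z - lam * \<phi> z"
      using cone[of z] by (simp add: \<phi>_def)
    have "\<phi> z - \<phi> y \<le> (l z - lam * \<phi> z) * dist z y" for y
    proof -
      have "\<phi> z - \<phi> y = k * (dist y x0 - dist z x0)"
        by (simp add: \<phi>_def algebra_simps)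
      also have "\<dots> \<le> k * dist z y"
        using k dist_triangle[of y x0 z] by (intro mult_left_mono) (auto simp: dist_commute)
      also have "\<dots> \<le> (l z - lam * \<phi> z) * dist z y"
        using key by (intro mult_right_mono) auto
      finally show ?thesis .
    qed
    then have "\<phi> z - max (W y) (\<phi> y) \<le> (l z - lam * \<phi> z) * dist z y" for y
      by (meson diff_left_mono max.cobounded2 order_trans)
    moreover have "lam * \<phi> z \<le> l z"
      using key k by linarith
    moreover have "max (W z) (\<phi> z) = \<phi> z"
      using False by simp
    ultimately show ?thesis
      by simp
  qed
qed

lemma is_subsolution_raise:
  assumes l_lsc: "lsc l" and lam: "0 < lam" and W: "is_subsolution l lam W"
    and slack: "global_slope W x0 < ereal (l x0 - lam * W x0)"
  obtains W' where "is_subsolution l lam W'" "W x0 < W' x0"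
proof -
  define h where "h = l x0 - lam * W x0"
  obtain g where "global_slope W x0 \<le> ereal g" "g < h"
    using ereal_dense2[OF slack] by (auto simp: h_def intro: less_imp_le)
  then have g: "0 \<le> g" and slope_g: "\<And>z. W x0 - W z \<le> g * dist z x0"
    by (auto simp: global_slope_le_iff dist_commute)
  define \<delta> where "\<delta> = (h - g) / 3"
  have \<delta>: "0 < \<delta>"
    using \<open>g < h\<close> by (simp add: \<delta>_def)
  then have "\<forall>\<^sub>F z in at x0. l x0 - \<delta> < l z"
    using l_lsc by (simp add: lsc_def)
  then obtain r where r: "0 < r" and near: "\<And>z. z \<noteq> x0 \<Longrightarrow> dist z x0 < r \<Longrightarrow> l x0 - \<delta> < l z"
    unfolding eventually_at by auto
  have l_near: "l x0 - \<delta> < l z" if "dist z x0 < r" for z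
    using near[OF _ that] \<delta> by (cases "z = x0") auto
  define \<epsilon> where "\<epsilon> = min (\<delta> / lam) (r * \<delta> / 2)"
  have \<epsilon>: "0 < \<epsilon>" "lam * \<epsilon> \<le> \<delta>" "\<epsilon> < r * \<delta>"
    using \<delta> r lam by (auto simp: \<epsilon>_def min_def field_simps)
  define k where "k = h - \<delta> - lam * \<epsilon>"
  have k: "g + \<delta> \<le> k"
    using \<epsilon> by (simp add: k_def \<delta>_def field_simps)
  \<comment> \<open>where the cone lies above \<open>W\<close>, the slope bound \<open>g < k\<close> confines \<open>z\<close> to the ball in which \<open>l > l x0 - \<delta>\<close>\<close>
  have "is_subsolution l lam (\<lambda>z. max (W z) (W x0 + \<epsilon> - k * dist z x0))"
  proof (rule is_subsolution_max_cone[OF W])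
    show "0 \<le> k"
      using g \<delta> k by linarith
    fix z assume above: "W z < W x0 + \<epsilon> - k * dist z x0"
    have "\<delta> * dist z x0 \<le> (k - g) * dist z x0"
      using k by (intro mult_right_mono) auto
    also have "\<dots> < \<epsilon>"
      using above slope_g[of z] by (simp add: algebra_simps)
    also have "\<dots> < \<delta> * r"
      using \<epsilon>(3) by (simp add: mult.commute)
    finally have "dist z x0 < r"
      using \<delta> by simp
    then have "l x0 - \<delta> < l z"
      by (rule l_near)
    moreover have "lam * (W x0 + \<epsilon> - k * dist z x0) \<le> lam * (W x0 + \<epsilon>)"
      using lam \<open>0 \<le> k\<close> by (simp add: mult_left_mono)
    ultimately show "k + lam * (W x0 + \<epsilon> - k * dist z x0) \<le> l z"
      by (simp add: k_def h_def algebra_simps)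
  qed
  moreover have "W x0 < max (W x0) (W x0 + \<epsilon> - k * dist x0 x0)"
    using \<epsilon> by simp
  ultimately show ?thesis
    using that by blast
qed

lemma maximal_subsolution_equation:
  assumes l_lsc: "lsc l" and lam: "0 < lam" and W: "is_subsolution l lam W"
    and maximal: "\<And>w. is_subsolution l lam w \<Longrightarrow> w x \<le> W x"
  shows "ereal (lam * W x) + global_slope W x = ereal (l x)"
proof -
  have "global_slope W x \<le> ereal (l x - lam * W x)"
    using W by (simp add: is_subsolution_iff_global_slope_le)
  moreover have "\<not> global_slope W x < ereal (l x - lam * W x)"
    by (metis is_subsolution_raise[OF l_lsc lam W] maximal not_le)
  ultimately have "global_slope W x = ereal (l x - lam * W x)"
    by simp
  then show ?thesis
    by simp
qed

lemma perron_solution_ge_subsolution: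
  assumes l_nonneg: "\<And>x. 0 \<le> l x" and l_lsc: "lsc l" and l_inf: "(INF x. ereal (l x)) = 0"
    and lam: "0 < lam" and u: "perron_solution l lam u" and w: "is_subsolution l lam w"
  shows "w x \<le> u x"
proof -
  define S where "S = {w. is_subsolution l lam w}"
  define W where "W = (\<lambda>x. SUP w\<in>S. w x)"
  have zero: "(\<lambda>_. 0) \<in> S"
    using is_subsolution_zero[OF l_nonneg] by (simp add: S_def)
  have W_sub: "is_subsolution l lam W"
    unfolding W_def using lam zero by (intro is_subsolution_SUP) (auto simp: S_def)
  have upper: "v y \<le> W y" if "is_subsolution l lam v" for v y
    using that W_sub lam unfolding W_def S_def
    by (intro cSUP_upper bdd_aboveI2[where M = "l y / lam"])
      (auto simp: is_subsolution_def pos_le_divide_eq mult.commute)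
  have W_nonneg: "0 \<le> W y" for y
    using upper[OF is_subsolution_zero[OF l_nonneg]] by simp
  have "ereal (lam * W y) + global_slope W y = ereal (l y)" for y
    using upper by (rule maximal_subsolution_equation[OF l_lsc lam W_sub])
  then have "is_solution l lam W"
    unfolding is_solution_def
    using is_subsolution_lsc[OF W_sub] is_subsolution_INF_eq_zero[OF lam l_inf W_nonneg W_sub]
    by blast
  then have "W x \<le> u x"
    using u by (simp add: perron_solution_def)
  with upper[OF w] show ?thesis
    by (rule order_trans)
qed

lemma perron_solution_antimono:
  assumes l_nonneg: "\<And>x. 0 \<le> l x" and l_lsc: "lsc l" and l_inf: "(INF x. ereal (l x)) = 0"
    and lam: "0 < lam" "lam \<le> mu"
    and u_lam: "perron_solution l lam u_lam" and u_mu: "perron_solution l mu u_mu"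
  shows "u_mu x \<le> u_lam x"
proof -
  have mu: "0 < mu"
    using lam by simp
  have "is_subsolution l mu u_mu"
    using u_mu by (simp add: perron_solution_def is_solution_imp_is_subsolution)
  moreover have "0 \<le> u_mu y" for y
    using perron_solution_ge_subsolution[OF l_nonneg l_lsc l_inf mu u_mu is_subsolution_zero[OF l_nonneg]]
    by simp
  ultimately have "is_subsolution l lam u_mu"
    using lam(2) by (rule is_subsolution_antimono)
  then show ?thesis
    by (rule perron_solution_ge_subsolution[OF l_nonneg l_lsc l_inf lam(1) u_lam])
qed

theorem proposition5p8:
  fixes l :: "'a::metric_space \<Rightarrow> real"
    and u :: "real \<Rightarrow> 'a \<Rightarrow> real"
  assumes l_nonneg: "\<And>x. l x \<ge> 0"
    and l_lsc: "lsc l"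
    and l_inf: "(INF x. ereal (l x)) = 0"
    and u_perron: "\<And>lam. lam > 0 \<Longrightarrow> perron_solution l lam (u lam)"
    and alpha: "alpha > 0"
  shows "\<forall>x. ((\<lambda>lam. u lam x) \<longlongrightarrow> u alpha x) (at_left alpha)"
proof
  fix x
  have antimono: "u mu y \<le> u lam y" if "0 < lam" "lam \<le> mu" for lam mu y
    using that by (intro perron_solution_antimono[OF l_nonneg l_lsc l_inf _ _ u_perron u_perron]) auto
  have lower: "u alpha y \<le> u mu y" if "mu \<in> {0<..<alpha}" for mu y
    using that by (intro antimono) auto
  define v where "v y = (INF mu\<in>{0<..<alpha}. u mu y)" for y
  have lim: "((\<lambda>mu. u mu y) \<longlongrightarrow> v y) (at_left alpha)" for y
    unfolding v_def using lower
    by (intro tendsto_at_left_INF_antimono[OF alpha] antimono bdd_belowI2) auto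
  have "is_subsolution l mu (u mu)" if "0 < mu" for mu
    using u_perron[OF that] by (simp add: perron_solution_def is_solution_imp_is_subsolution)
  then have "\<forall>\<^sub>F mu in at_left alpha. is_subsolution l mu (u mu)"
    using eventually_at_left_real[OF alpha] by (auto elim: eventually_mono)
  then have "is_subsolution l alpha v"
    by (rule is_subsolution_tendsto[OF trivial_limit_at_left_real tendsto_ident_at lim])
  then have "v x \<le> u alpha x"
    by (rule perron_solution_ge_subsolution[OF l_nonneg l_lsc l_inf alpha u_perron[OF alpha]])
  moreover have "u alpha x \<le> v x"
    unfolding v_def using alpha lower by (intro cINF_greatest) auto
  ultimately show "((\<lambda>lam. u lam x) \<longlongrightarrow> u alpha x) (at_left alpha)"
    using lim[of x] by simp
qed

end
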